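(* Let $a,b,c>0$. Let $B(a,b,c)$ be the semi-infinite matrix indexed by $j,k\in\mathbb{Z}_{+}$ with entries \[ B(a,b,c)_{j,k}=\frac{\Gamma(j+k+a)}{\Gamma(j+k+b+c)}\sqrt{\frac{\Gamma(j+b)\Gamma(j+c)\Gamma(k+b)\Gamma(k+c)}{\Gamma(j+a)\,j!\,\Gamma(k+a)\,k!}}, \] and let $T(a,b,c)$ be the symmetric Jacobi matrix indexed by $\mathbb{Z}_{+}$ with entries \[ T_{j,j}=j\,(j+c-1)+(j+a)(j+b),\qquad T_{j,j+1}=T_{j+1,j}=-\sqrt{(j+1)(j+a)(j+b)(j+c)}, \] and $T_{j,k}=0$ if $|j-k|\ge 2$. Then $B(a,b,c)$ and $T(a,b,c)$ commute (as matrices, the products being well defined entrywise since $T$ is tridiagonal).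
   Context: $\mathbb{Z}_{+}=\{0,1,2,\ldots\}$ and $\Gamma$ is Euler's Gamma function. *)

theory Defs
  imports "HOL-Analysis.Analysis"
begin

definition Bmat :: "real \<Rightarrow> real \<Rightarrow> real \<Rightarrow> nat \<Rightarrow> nat \<Rightarrow> real" where
  "Bmat a b c j k =
     Gamma (real (j + k) + a) / Gamma (real (j + k) + b + c) *
     sqrt ((Gamma (real j + b) * Gamma (real j + c) * Gamma (real k + b) * Gamma (real k + c)) /
           (Gamma (real j + a) * fact j * Gamma (real k + a) * fact k))"

definition Tmat :: "real \<Rightarrow> real \<Rightarrow> real \<Rightarrow> nat \<Rightarrow> nat \<Rightarrow> real" where
  "Tmat a b c j k =
     (if j = k then real j * (real j + c - 1) + (real j + a) * (real j + b)
      else if k = j + 1 then - sqrt (real (j + 1) * (real j + a) * (real j + b) * (real j + c))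
      else if j = k + 1 then - sqrt (real (k + 1) * (real k + a) * (real k + b) * (real k + c))
      else 0)"

text \<open>Products with the tridiagonal T are finite sums: (B T)_{jk} only involves l <= k+1,
  and (T B)_{jk} only involves l <= j+1 (all other entries of T vanish).\<close>

definition mult_right_tridiag :: "(nat \<Rightarrow> nat \<Rightarrow> real) \<Rightarrow> (nat \<Rightarrow> nat \<Rightarrow> real) \<Rightarrow> nat \<Rightarrow> nat \<Rightarrow> real" where
  "mult_right_tridiag M T j k = (\<Sum>l\<le>k+1. M j l * T l k)"

definition mult_left_tridiag :: "(nat \<Rightarrow> nat \<Rightarrow> real) \<Rightarrow> (nat \<Rightarrow> nat \<Rightarrow> real) \<Rightarrow> nat \<Rightarrow> nat \<Rightarrow> real" where
  "mult_left_tridiag T M j k = (\<Sum>l\<le>j+1. T j l * M l k)"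

end

theory Submission
  imports Defs
begin

text \<open>
  The matrix B factors as D H D with H the Hankel matrix of the Gamma quotient
  g(n) = Gamma(n+a)/Gamma(n+b+c) (gamma_quot) and D the diagonal matrix of the
  weights w_j (gamma_weight).
  Using the recursions of g and w, the entry (B T)_{jk} becomes w_j w_k F(k, j+k) (F = bt_factor), where
  F(y, n)/g(n) is a quadratic in y that is invariant under y \<mapsto> n - y. Hence B T is
  symmetric, and since B and T are symmetric, T B = (B T)^T = B T.
\<close>

lemma Gamma_plus1_pos: "x > 0 \<Longrightarrow> Gamma (x + 1) = x * Gamma (x::real)"
  by (rule Gamma_plus1) (auto simp: nonpos_Ints_def)

lemma mult_left_tridiag_eq_transpose:
  assumes "\<And>j k. M j k = M k j" and "\<And>j k. T j k = T k j"
  shows "mult_left_tridiag T M j k = mult_right_tridiag M T k j"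
  unfolding mult_left_tridiag_def mult_right_tridiag_def
  by (rule sum.cong) (simp_all add: assms mult.commute)

lemma mult_right_tridiag_0:
  "mult_right_tridiag M T j 0 = M j 0 * T 0 0 + M j 1 * T 1 0"
  unfolding mult_right_tridiag_def by simp

lemma mult_right_tridiag_Suc:
  assumes "\<And>l. l < m \<Longrightarrow> T l (Suc m) = 0"
  shows "mult_right_tridiag M T j (Suc m)
       = M j m * T m (Suc m) + M j (Suc m) * T (Suc m) (Suc m)
         + M j (Suc (Suc m)) * T (Suc (Suc m)) (Suc m)"
proof -
  have "(\<Sum>l<m. M j l * T l (Suc m)) = 0"
    by (rule sum.neutral) (simp add: assms)
  then show ?thesis
    unfolding mult_right_tridiag_def by (simp add: lessThan_Suc_atMost[symmetric])
qed

definition jacobi_offdiag :: "real \<Rightarrow> real \<Rightarrow> real \<Rightarrow> nat \<Rightarrow> real" where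
  "jacobi_offdiag a b c m = sqrt (real (m + 1) * (real m + a) * (real m + b) * (real m + c))"

lemma Tmat_sym: "Tmat a b c j k = Tmat a b c k j"
  unfolding Tmat_def by auto

lemma Tmat_diag: "Tmat a b c k k = real k * (real k + c - 1) + (real k + a) * (real k + b)"
  unfolding Tmat_def by simp

lemma Tmat_super: "Tmat a b c m (Suc m) = - jacobi_offdiag a b c m"
  unfolding Tmat_def jacobi_offdiag_def by simp

lemma Tmat_sub: "Tmat a b c (Suc m) m = - jacobi_offdiag a b c m"
  unfolding Tmat_def jacobi_offdiag_def by simp

lemma Tmat_far: "l < m \<Longrightarrow> Tmat a b c l (Suc m) = 0"
  unfolding Tmat_def by simp

definition gamma_quot :: "real \<Rightarrow> real \<Rightarrow> real \<Rightarrow> real \<Rightarrow> real" where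
  "gamma_quot a b c x = Gamma (x + a) / Gamma (x + b + c)"

definition gamma_weight :: "real \<Rightarrow> real \<Rightarrow> real \<Rightarrow> nat \<Rightarrow> real" where
  "gamma_weight a b c j = sqrt (Gamma (real j + b) * Gamma (real j + c) / (Gamma (real j + a) * fact j))"

lemma Bmat_factor:
  "Bmat a b c j k = gamma_quot a b c (real (j + k)) * gamma_weight a b c j * gamma_weight a b c k"
proof -
  have "Gamma (real j + b) * Gamma (real j + c) * Gamma (real k + b) * Gamma (real k + c) /
          (Gamma (real j + a) * fact j * Gamma (real k + a) * fact k)
      = Gamma (real j + b) * Gamma (real j + c) / (Gamma (real j + a) * fact j) *
        (Gamma (real k + b) * Gamma (real k + c) / (Gamma (real k + a) * fact k))"
    by (simp add: times_divide_times_eq mult.assoc mult.left_commute)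
  then show ?thesis
    unfolding Bmat_def gamma_quot_def gamma_weight_def by (simp only: real_sqrt_mult mult.assoc)
qed

lemma Bmat_sym: "Bmat a b c j k = Bmat a b c k j"
  by (simp add: Bmat_factor add.commute mult.commute mult.left_commute)

lemma gamma_quot_plus1:
  assumes "x + a > 0" and "x + b + c > 0"
  shows "gamma_quot a b c (x + 1) = gamma_quot a b c x * (x + a) / (x + b + c)"
proof -
  have "Gamma (x + 1 + a) = (x + a) * Gamma (x + a)"
    using Gamma_plus1_pos[of "x + a"] assms by (simp add: add_ac)
  moreover have "Gamma (x + 1 + b + c) = (x + b + c) * Gamma (x + b + c)"
    using Gamma_plus1_pos[of "x + b + c"] assms by (simp add: add_ac)
  ultimately show ?thesis
    using assms by (simp add: gamma_quot_def field_simps)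
qed

lemma gamma_weight_Suc:
  assumes "a > 0" "b > 0" "c > 0"
  shows "gamma_weight a b c (Suc k)
       = gamma_weight a b c k * sqrt ((real k + b) * (real k + c) / (real (k + 1) * (real k + a)))"
proof -
  have step: "Gamma (real (Suc k) + x) = (real k + x) * Gamma (real k + x)" if "x > 0" for x
    using Gamma_plus1_pos[of "real k + x"] that by (simp add: add_ac)
  have "Gamma (real k + b) > 0" "Gamma (real k + c) > 0" "Gamma (real k + a) > 0"
    using assms by simp_all
  then have "Gamma (real (Suc k) + b) * Gamma (real (Suc k) + c) / (Gamma (real (Suc k) + a) * fact (Suc k))
      = Gamma (real k + b) * Gamma (real k + c) / (Gamma (real k + a) * fact k)
        * ((real k + b) * (real k + c) / (real (k + 1) * (real k + a)))"
    unfolding step[OF assms(1)] step[OF assms(2)] step[OF assms(3)] fact_Suc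
    using assms by (simp add: field_simps)
  then show ?thesis
    unfolding gamma_weight_def by (simp only: real_sqrt_mult)
qed

lemma gamma_weight_Suc_offdiag:
  assumes "a > 0" "b > 0" "c > 0"
  shows "gamma_weight a b c (Suc k) * jacobi_offdiag a b c k
       = gamma_weight a b c k * ((real k + b) * (real k + c))"
    and "gamma_weight a b c k * jacobi_offdiag a b c k
       = gamma_weight a b c (Suc k) * (real (k + 1) * (real k + a))"
proof -
  define A where "A = real (k + 1) * (real k + a)"
  define C where "C = (real k + b) * (real k + c)"
  have "A > 0" "C > 0" using assms by (simp_all add: A_def C_def)
  have "sqrt (C / A) * A = sqrt (C / A * (A * A))"
    using \<open>A > 0\<close> by (simp only: real_sqrt_mult real_sqrt_abs2) simp
  also have "C / A * (A * A) = A * C"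
    using \<open>A > 0\<close> by (simp add: field_simps)
  finally have offdiag: "jacobi_offdiag a b c k = sqrt (C / A) * A"
    by (simp add: jacobi_offdiag_def A_def C_def mult.assoc)
  have weight: "gamma_weight a b c (Suc k) = gamma_weight a b c k * sqrt (C / A)"
    using gamma_weight_Suc[OF assms] by (simp add: A_def C_def)
  have "sqrt (C / A) * sqrt (C / A) * A = C"
    using \<open>A > 0\<close> \<open>C > 0\<close> by simp
  then show "gamma_weight a b c (Suc k) * jacobi_offdiag a b c k = gamma_weight a b c k * C"
    unfolding offdiag weight by (metis mult.assoc)
  show "gamma_weight a b c k * jacobi_offdiag a b c k = gamma_weight a b c (Suc k) * A"
    unfolding offdiag weight by (simp add: mult.assoc)
qed

definition bt_factor :: "real \<Rightarrow> real \<Rightarrow> real \<Rightarrow> real \<Rightarrow> real \<Rightarrow> real" where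
  "bt_factor a b c y n =
     - gamma_quot a b c (n - 1) * y * (y - 1 + a)
     + gamma_quot a b c n * (y * (y + c - 1) + (y + a) * (y + b))
     - gamma_quot a b c (n + 1) * ((y + b) * (y + c))"

lemma bt_factor_reflect:
  assumes "a > 0" "b > 0" "c > 0" and "n \<ge> 1"
  shows "bt_factor a b c (n - y) n = bt_factor a b c y n"
proof -
  have pos: "n - 1 + a > 0" "n - 1 + b + c > 0" "n + a > 0" "n + b + c > 0"
    using assms by auto
  have "gamma_quot a b c n = gamma_quot a b c (n - 1) * (n - 1 + a) / (n - 1 + b + c)"
    using gamma_quot_plus1[of "n - 1"] pos by simp
  then have prev: "gamma_quot a b c (n - 1) = gamma_quot a b c n * (n - 1 + b + c) / (n - 1 + a)"
    using pos by (simp add: field_simps)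
  have succ: "gamma_quot a b c (n + 1) = gamma_quot a b c n * (n + a) / (n + b + c)"
    using gamma_quot_plus1[of n] pos by simp
  show ?thesis
    unfolding bt_factor_def prev succ using pos by (simp add: field_simps)
qed

lemma mult_right_tridiag_BT:
  assumes "a > 0" "b > 0" "c > 0"
  shows "mult_right_tridiag (Bmat a b c) (Tmat a b c) j k
       = gamma_weight a b c j * gamma_weight a b c k * bt_factor a b c (real k) (real j + real k)"
proof (cases k)
  case 0
  have "gamma_weight a b c 1 * jacobi_offdiag a b c 0 = gamma_weight a b c 0 * (b * c)"
    using gamma_weight_Suc_offdiag(1)[OF assms, of 0] by simp
  then show ?thesis
    using 0 by (simp add: mult_right_tridiag_0 Bmat_factor Tmat_diag Tmat_sub[of a b c 0, simplified]
        bt_factor_def algebra_simps)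
next
  case (Suc m)
  note offdiag = gamma_weight_Suc_offdiag(2)[OF assms, of m]
    gamma_weight_Suc_offdiag(1)[OF assms, of "Suc m"]
  have "mult_right_tridiag (Bmat a b c) (Tmat a b c) j (Suc m)
     = - gamma_quot a b c (real (j + m)) * gamma_weight a b c j
           * (gamma_weight a b c m * jacobi_offdiag a b c m)
       + gamma_quot a b c (real (j + Suc m)) * gamma_weight a b c j * gamma_weight a b c (Suc m)
           * Tmat a b c (Suc m) (Suc m)
       - gamma_quot a b c (real (j + Suc (Suc m))) * gamma_weight a b c j
           * (gamma_weight a b c (Suc (Suc m)) * jacobi_offdiag a b c (Suc m))"
    by (simp add: mult_right_tridiag_Suc Tmat_far Bmat_factor Tmat_super Tmat_sub algebra_simps)
  also have "\<dots> = gamma_weight a b c j * gamma_weight a b c (Suc m)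
                  * bt_factor a b c (real (Suc m)) (real j + real (Suc m))"
    unfolding offdiag Tmat_diag bt_factor_def by (simp add: algebra_simps)
  finally show ?thesis using Suc by simp
qed

theorem mainTheorem2:
  fixes a b c :: real
  assumes "a > 0" and "b > 0" and "c > 0"
  shows "\<forall>j k. mult_right_tridiag (Bmat a b c) (Tmat a b c) j k
              = mult_left_tridiag (Tmat a b c) (Bmat a b c) j k"
proof (intro allI)
  fix j k
  have reflect: "bt_factor a b c (real j) (real k + real j) = bt_factor a b c (real k) (real j + real k)"
  proof (cases "j + k = 0")
    case False
    then have "real j + real k \<ge> 1" by (simp flip: of_nat_add add: Suc_leI)
    then show ?thesis
      using bt_factor_reflect[OF assms, of "real j + real k" "real k"] by (simp add: add.commute)
  qed simp
  have "mult_left_tridiag (Tmat a b c) (Bmat a b c) j k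
      = mult_right_tridiag (Bmat a b c) (Tmat a b c) k j"
    by (rule mult_left_tridiag_eq_transpose) (rule Bmat_sym, rule Tmat_sym)
  also have "\<dots> = mult_right_tridiag (Bmat a b c) (Tmat a b c) j k"
    unfolding mult_right_tridiag_BT[OF assms] reflect by simp
  finally show "mult_right_tridiag (Bmat a b c) (Tmat a b c) j k
              = mult_left_tridiag (Tmat a b c) (Bmat a b c) j k" ..
qed

end
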